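(* Let $(G;+)$ be a commutative groupoid with elements $r,s,t,u,v$ such that $x+u = v$ and $x+v = u$ for all $x \in \{r,s,t\}$, and $r+s = s$, $s+t = t$, $t+r = r$. Then the multisets $\langle r,s,t,u\rangle$ and $\langle r,s,t,v\rangle$ have the same deck. Moreover, either $r,s,t$ are pairwise distinct or $r = s = t$; in the former case $+$ is not associative, and in the latter case, if $u \neq v$, then $+$ is not left alternative (i.e., the identity $x+(x+y) = (x+x)+y$ fails).
   Context: A (finite) multiset over a set $X$ is a function $X \to \mathbb{N}$ with finite support; $\langle x_1,\dots,x_k\rangle$ denotes the multiset listing its elements with multiplicity. A commutative groupoid is a set $G$ with a commutative binary operation $+$. For a multiset $M = \langle m_1,\dots,m_n\rangle$ ($n\ge 2$) over $G$, the card $M_{\{i,j\}}$ ($i<j$) is obtained from $M$ by removing one occurrence each of $m_i$ and $m_j$ and adding one occurrence of $m_i+m_j$; the deck of $M$ is the multiset of all $\binom n2$ cards. *)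

theory Defs
  imports Main "HOL-Library.Multiset"
begin

definition card_of :: "('a \<Rightarrow> 'a \<Rightarrow> 'a) \<Rightarrow> 'a list \<Rightarrow> nat \<Rightarrow> nat \<Rightarrow> 'a multiset" where
  "card_of pl xs i j = add_mset (pl (xs ! i) (xs ! j)) (mset xs - {#xs ! i, xs ! j#})"

text \<open>The deck: multiset of all cards M_{i,j}, i<j<n, for the listing xs of M.\<close>
definition deck :: "('a \<Rightarrow> 'a \<Rightarrow> 'a) \<Rightarrow> 'a list \<Rightarrow> 'a multiset multiset" where
  "deck pl xs = mset (concat (map (\<lambda>i. map (\<lambda>j. card_of pl xs i j) [Suc i..<length xs]) [0..<length xs]))"

end

theory Submission
  imports Defs
begin

text \<open>The cards of \<open>\<langle>a,b,c,w\<rangle>\<close> that merge \<open>w\<close> with one of \<open>a,b,c\<close> turn \<open>w\<close> into the other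
  element of \<open>{u,v}\<close>; the remaining three cards keep \<open>w\<close>. So both decks consist of the two
  families \<open>P + u\<close>, \<open>Q + v\<close> and \<open>P + v\<close>, \<open>Q + u\<close>, where \<open>P\<close> lists the pairs left by a merge
  inside \<open>{a,b,c}\<close> and \<open>Q\<close> the pairs left untouched, and the decks agree once \<open>P = Q\<close>.
  The cyclic absorption laws \<open>r+s = s\<close>, \<open>s+t = t\<close>, \<open>t+r = r\<close> give exactly \<open>P = Q\<close>.\<close>

lemma deck_four:
  "deck pl [a, b, c, d] =
     {# add_mset (pl a b) {#c, d#}, add_mset (pl a c) {#b, d#}, add_mset (pl a d) {#b, c#},
        add_mset (pl b c) {#a, d#}, add_mset (pl b d) {#a, c#}, add_mset (pl c d) {#a, b#} #}"
  by (simp add: deck_def card_of_def upt_rec add_mset_commute)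

lemma deck_swap_fourth:
  assumes swap: "\<forall>x\<in>{a, b, c}. pl x u = v \<and> pl x v = u"
    and pairs: "{# {#pl a b, c#}, {#pl a c, b#}, {#pl b c, a#} #} = {# {#b, c#}, {#a, c#}, {#a, b#} #}"
  shows "deck pl [a, b, c, u] = deck pl [a, b, c, v]"
proof -
  let ?P = "{# {#pl a b, c#}, {#pl a c, b#}, {#pl b c, a#} #}"
  let ?Q = "{# {#b, c#}, {#a, c#}, {#a, b#} #}"
  have "deck pl [a, b, c, w] = image_mset (add_mset w) ?P + image_mset (add_mset w') ?Q"
    if "w' \<in> {u, v}" "\<forall>x\<in>{a, b, c}. pl x w = w'" for w w'
    using that by (auto simp: deck_four add_mset_commute)
  then have "deck pl [a, b, c, u] = image_mset (add_mset u) ?P + image_mset (add_mset v) ?Q"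
    and "deck pl [a, b, c, v] = image_mset (add_mset v) ?P + image_mset (add_mset u) ?Q"
    using swap by auto
  then show ?thesis
    using pairs by (simp add: union_commute)
qed

context
  fixes pl :: "'a \<Rightarrow> 'a \<Rightarrow> 'a" and r s t :: 'a
  assumes comm: "\<forall>x y. pl x y = pl y x"
    and rs: "pl r s = s" and st: "pl s t = t" and tr: "pl t r = r"
begin

lemma cyclic_absorption_pairs:
  "{# {#pl r s, t#}, {#pl r t, s#}, {#pl s t, r#} #} = {# {#s, t#}, {#r, t#}, {#r, s#} #}"
  using comm rs st tr by (simp add: add_mset_commute)

lemma cyclic_absorption_distinct_or_equal:
  "(r \<noteq> s \<and> s \<noteq> t \<and> r \<noteq> t) \<or> (r = s \<and> s = t)"
  using comm rs st tr by metis

lemma cyclic_absorption_not_assoc: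
  assumes "r \<noteq> t"
  shows "\<not> (\<forall>x y z. pl (pl x y) z = pl x (pl y z))"
proof -
  have "pl (pl r s) t = t" using rs st by simp
  moreover have "pl r (pl s t) = r" using st tr comm by metis
  ultimately show ?thesis using assms by metis
qed

end

lemma swap_not_left_alternative:
  assumes "pl r r = r" "pl r u = v" "pl r v = u" "u \<noteq> v"
  shows "\<not> (\<forall>x y. pl x (pl x y) = pl (pl x x) y)"
proof -
  have "pl r (pl r u) = u" "pl (pl r r) u = v" using assms by simp_all
  then show ?thesis using assms(4) by metis
qed

theorem mainTheorem7:
  fixes pl :: "'a \<Rightarrow> 'a \<Rightarrow> 'a" and r s t u v :: 'a
  assumes comm: "\<forall>x y. pl x y = pl y x"
    and uv: "\<forall>x\<in>{r, s, t}. pl x u = v \<and> pl x v = u"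
    and rs: "pl r s = s" and st: "pl s t = t" and tr: "pl t r = r"
  shows "deck pl [r, s, t, u] = deck pl [r, s, t, v]
    \<and> ((r \<noteq> s \<and> s \<noteq> t \<and> r \<noteq> t) \<or> (r = s \<and> s = t))
    \<and> ((r \<noteq> s \<and> s \<noteq> t \<and> r \<noteq> t) \<longrightarrow> \<not> (\<forall>x y z. pl (pl x y) z = pl x (pl y z)))
    \<and> ((r = s \<and> s = t \<and> u \<noteq> v) \<longrightarrow> \<not> (\<forall>x y. pl x (pl x y) = pl (pl x x) y))"
proof -
  have "deck pl [r, s, t, u] = deck pl [r, s, t, v]"
    using deck_swap_fourth[OF uv cyclic_absorption_pairs[OF comm rs st tr]] .
  moreover have "(r \<noteq> s \<and> s \<noteq> t \<and> r \<noteq> t) \<or> (r = s \<and> s = t)"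
    using cyclic_absorption_distinct_or_equal[OF comm rs st tr] .
  moreover have "r \<noteq> t \<Longrightarrow> \<not> (\<forall>x y z. pl (pl x y) z = pl x (pl y z))"
    using cyclic_absorption_not_assoc[OF comm rs st tr] .
  moreover have "r = s \<and> s = t \<and> u \<noteq> v \<Longrightarrow> \<not> (\<forall>x y. pl x (pl x y) = pl (pl x x) y)"
    using swap_not_left_alternative[of pl r u v] rs uv by auto
  ultimately show ?thesis by blast
qed

end
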